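(* Let $E$ be a disjunctive interval multiplicity expression (DIME) over a finite alphabet $\Sigma$ and let $w$ be an unordered word over $\Sigma$. Then $w\in L(E)$ if and only if $w\models \Delta_E$.
   Context: Unordered words are functions $w:\Sigma\to\mathbb{N}_0$; $a\in w$ means $w(a)\neq 0$; $\varepsilon$ is the all-zero word; unordered concatenation $\uplus$ is multiset union, extended to languages pointwise. An interval is $[n,m]$ or $[n,m]^?$ with $n\in\mathbb{N}_0$, $m\in\mathbb{N}_0\cup\{\infty\}$; $L(E^{[n,m]})=\{w_1\uplus\dots\uplus w_i\mid n\le i\le m, w_j\in L(E)\}$, $L(E^{[n,m]^?})=L(E^{[n,m]})\cup\{\varepsilon\}$; the multiplicities $*,+,?,1$ denote $[0,\infty],[1,\infty],[0,1],[1,1]$. Also $L(a)=\{a\}$, $L(E_1\mid E_2)=L(E_1)\cup L(E_2)$, $L(E_1\mathbin{|\hspace{-0.1em}|} E_2)=L(E_1)\uplus L(E_2)$. An atom is $(a_1^{I_1}\mathbin{|\hspace{-0.1em}|}\dots\mathbin{|\hspace{-0.1em}|} a_k^{I_k})$ with $a_i\in\Sigma$ and each $I_i\in\{?,1\}$. A clause is $(A_1^{I_1}\mid\dots\mid A_k^{I_k})$ with atoms $A_i$ and intervals $I_i$; it is simple if each $I_i\in\{?,1\}$. A DIME is $(D_1^{I_1}\mathbin{|\hspace{-0.1em}|}\dots\mathbin{|\hspace{-0.1em}|} D_k^{I_k})$ where for each $i$ either $D_i$ is a simple clause and $I_i\in\{+,*\}$, or $D_i$ is a clause and $I_i\in\{1,?\}$;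 moreover each symbol of $\Sigma$ occurs at most once in the DIME. The characterizing tuple of $E$ is $\Delta_E=(C_E,N_E,P_E,K_E)$ where $C_E=\{(a,b)\in\Sigma\times\Sigma\mid \neg\exists w\in L(E).\ a\in w\wedge b\in w\}$, $N_E=\{(a,w(a))\mid a\in\Sigma, w\in L(E)\}$, $P_E=\{X\subseteq\Sigma\mid\forall w\in L(E).\ \exists a\in X.\ a\in w\}$, $K_E=\{(a,b)\in\Sigma\times\Sigma\mid\forall w\in L(E).\ w(a)\ge w(b)\}$. An unordered word $w$ satisfies $\Delta_E$, written $w\models\Delta_E$, if: (1) for all $(a,b)\in C_E$, not both $a\in w$ and $b\in w$; (2) for all $a\in\Sigma$, $(a,w(a))\in N_E$; (3) for all $X\in P_E$ there is $a\in X$ with $a\in w$; (4) for all $(a,b)\in K_E$, $w(a)\ge w(b)$. *)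

theory Defs
  imports Main "HOL-Library.Extended_Nat"
begin

text \<open>Unordered words over alphabet 'a: functions 'a \<Rightarrow> nat.\<close>
type_synonym 'a uword = "'a \<Rightarrow> nat"

definition uempty :: "'a uword" where "uempty = (\<lambda>_. 0)"

definition uconc :: "'a uword \<Rightarrow> 'a uword \<Rightarrow> 'a uword" where
  "uconc u v = (\<lambda>a. u a + v a)"

definition lconc :: "'a uword set \<Rightarrow> 'a uword set \<Rightarrow> 'a uword set" where
  "lconc A B = {uconc u v | u v. u \<in> A \<and> v \<in> B}"

fun lpow :: "nat \<Rightarrow> 'a uword set \<Rightarrow> 'a uword set" where
  "lpow 0 A = {uempty}"
| "lpow (Suc i) A = lconc A (lpow i A)"

text \<open>Intervals: Intv n m q stands for [n,m] (q = False) or [n,m]^? (q = True).\<close>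
datatype interval = Intv nat enat bool

definition iv_star :: interval where "iv_star = Intv 0 \<infinity> False"
definition iv_plus :: interval where "iv_plus = Intv 1 \<infinity> False"
definition iv_opt  :: interval where "iv_opt  = Intv 0 1 False"
definition iv_one  :: interval where "iv_one  = Intv 1 1 False"

datatype 'a uexp = Sym 'a | Disj "'a uexp list" | Conc "'a uexp list" | Mult "'a uexp" interval

fun lang :: "'a uexp \<Rightarrow> 'a uword set" where
  "lang (Sym a) = {(\<lambda>b. if b = a then 1 else 0)}"
| "lang (Disj Es) = (\<Union>E\<in>set Es. lang E)"
| "lang (Conc Es) = foldr (\<lambda>E L. lconc (lang E) L) Es {uempty}"
| "lang (Mult E (Intv n m q)) =
     {w. \<exists>i::nat. n \<le> i \<and> enat i \<le> m \<and> w \<in> lpow i (lang E)} \<union> (if q then {uempty} else {})"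

fun syms :: "'a uexp \<Rightarrow> 'a list" where
  "syms (Sym a) = [a]"
| "syms (Disj Es) = concat (map syms Es)"
| "syms (Conc Es) = concat (map syms Es)"
| "syms (Mult E I) = syms E"

definition is_atom :: "'a uexp \<Rightarrow> bool" where
  "is_atom A \<longleftrightarrow> (\<exists>xs. xs \<noteq> [] \<and> A = Conc (map (\<lambda>(a, I). Mult (Sym a) I) xs)
                     \<and> (\<forall>(a, I)\<in>set xs. I \<in> {iv_opt, iv_one}))"

definition is_clause :: "'a uexp \<Rightarrow> bool" where
  "is_clause D \<longleftrightarrow> (\<exists>xs. xs \<noteq> [] \<and> D = Disj (map (\<lambda>(A, I). Mult A I) xs)
                     \<and> (\<forall>(A, I)\<in>set xs. is_atom A))"

definition is_simple_clause :: "'a uexp \<Rightarrow> bool" where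
  "is_simple_clause D \<longleftrightarrow> (\<exists>xs. xs \<noteq> [] \<and> D = Disj (map (\<lambda>(A, I). Mult A I) xs)
                     \<and> (\<forall>(A, I)\<in>set xs. is_atom A \<and> I \<in> {iv_opt, iv_one}))"

definition is_dime :: "'a uexp \<Rightarrow> bool" where
  "is_dime E \<longleftrightarrow> (\<exists>xs. xs \<noteq> [] \<and> E = Conc (map (\<lambda>(D, I). Mult D I) xs)
                     \<and> (\<forall>(D, I)\<in>set xs. (is_simple_clause D \<and> I \<in> {iv_plus, iv_star})
                                        \<or> (is_clause D \<and> I \<in> {iv_one, iv_opt})))
                 \<and> distinct (syms E)"

text \<open>Characterizing tuple (Sigma = UNIV of the finite alphabet type).\<close>
definition C_of :: "'a uexp \<Rightarrow> ('a \<times> 'a) set" where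
  "C_of E = {(a, b). \<not> (\<exists>w\<in>lang E. w a \<noteq> 0 \<and> w b \<noteq> 0)}"

definition N_of :: "'a uexp \<Rightarrow> ('a \<times> nat) set" where
  "N_of E = {(a, w a) | a w. w \<in> lang E}"

definition P_of :: "'a uexp \<Rightarrow> 'a set set" where
  "P_of E = {X. \<forall>w\<in>lang E. \<exists>a\<in>X. w a \<noteq> 0}"

definition K_of :: "'a uexp \<Rightarrow> ('a \<times> 'a) set" where
  "K_of E = {(a, b). \<forall>w\<in>lang E. w a \<ge> w b}"

definition sat :: "'a uword \<Rightarrow> 'a uexp \<Rightarrow> bool" where
  "sat w E \<longleftrightarrow>
     (\<forall>(a, b)\<in>C_of E. \<not> (w a \<noteq> 0 \<and> w b \<noteq> 0)) \<and>
     (\<forall>a. (a, w a) \<in> N_of E) \<and>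
     (\<forall>X\<in>P_of E. \<exists>a\<in>X. w a \<noteq> 0) \<and>
     (\<forall>(a, b)\<in>K_of E. w a \<ge> w b)"

end

(*
  Soundness is trivial. For completeness, the constraints of the characterizing tuple survive
  restriction of words to a set of letters, so a word satisfying the tuple of a concatenation of
  languages over disjoint alphabets restricts to words satisfying the tuples of the factors; hence
  it suffices that every factor of a DIME is determined by its tuple.
  The i-th power of an atom consists of the words with count i on its mandatory letters and at most
  i on its optional ones. The K-constraints force a satisfying word to be constant on the mandatory
  letters of every atom and to dominate the optional ones there. For a clause with multiplicity 1 or ?,
  the C-constraints confine a nonempty satisfying word to the letters of one atom, and the
  N-constraints place its level inside that atom's interval. For a simple clause under + or *, the
  restrictions of the word to the atoms are powers of the atoms, whose concatenation lies in the star
  of the clause.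
*)
theory Submission
  imports Defs
begin

lemma distinct_concat_map_unique:
  "distinct (concat (map f xs)) \<Longrightarrow> x \<in> set xs \<Longrightarrow> y \<in> set xs \<Longrightarrow> a \<in> set (f x) \<Longrightarrow> a \<in> set (f y)
    \<Longrightarrow> x = y"
  by (induction xs) auto

lemma distinct_concat_map_member: "distinct (concat (map f xs)) \<Longrightarrow> x \<in> set xs \<Longrightarrow> distinct (f x)"
  by (induction xs) auto

lemma uempty_apply [simp]: "uempty a = 0"
  by (simp add: uempty_def)

lemma uconc_apply: "uconc u v a = u a + v a"
  by (simp add: uconc_def)

lemma eq_uempty_iff: "w = uempty \<longleftrightarrow> (\<forall>a. w a = 0)"
  by (auto simp: uempty_def)

lemma uconc_uempty [simp]: "uconc u uempty = u" "uconc uempty u = u"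
  by (auto simp: uconc_def uempty_def)

lemma uconc_commute: "uconc u v = uconc v u"
  by (auto simp: uconc_def)

lemma uconc_assoc: "uconc (uconc u v) x = uconc u (uconc v x)"
  by (auto simp: uconc_def)

lemma mem_lconc_iff: "x \<in> lconc A B \<longleftrightarrow> (\<exists>u\<in>A. \<exists>v\<in>B. x = uconc u v)"
  unfolding lconc_def by auto

lemma lconc_commute: "lconc A B = lconc B A"
  unfolding lconc_def by (metis uconc_commute)

lemma lconc_uempty [simp]: "lconc A {uempty} = A"
  by (auto simp: mem_lconc_iff)

lemma uconc_mem_lpow: "u \<in> lpow i L \<Longrightarrow> v \<in> lpow j L \<Longrightarrow> uconc u v \<in> lpow (i + j) L"
proof (induction i arbitrary: u)
  case (Suc i)
  then obtain x y where "x \<in> L" "y \<in> lpow i L" "u = uconc x y"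
    by (auto simp: mem_lconc_iff)
  with Suc.IH[of y] Suc.prems(2) show ?case
    by (auto simp: mem_lconc_iff uconc_assoc)
qed simp

definition lstar :: "'a uword set \<Rightarrow> 'a uword set" where
  "lstar L = (\<Union>i. lpow i L)"

lemma uempty_mem_lstar: "uempty \<in> lstar L"
  unfolding lstar_def using lpow.simps(1) by blast

lemma uconc_mem_lstar: "u \<in> lstar L \<Longrightarrow> v \<in> lstar L \<Longrightarrow> uconc u v \<in> lstar L"
  unfolding lstar_def by (blast intro: uconc_mem_lpow)

lemma lpow_subset_lstar: "L \<subseteq> lstar L' \<Longrightarrow> lpow i L \<subseteq> lstar L'"
  by (induction i) (auto simp: mem_lconc_iff uempty_mem_lstar intro!: uconc_mem_lstar)

lemma subset_lstar: "L \<subseteq> lstar L"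
  unfolding lstar_def using lpow.simps(2)[of 0 L] by (metis UN_upper UNIV_I lconc_uempty lpow.simps(1))

lemma lstar_mono: "L \<subseteq> L' \<Longrightarrow> lstar L \<subseteq> lstar L'"
proof -
  assume "L \<subseteq> L'"
  then have "lpow i L \<subseteq> lstar L'" for i
    using subset_lstar[of L'] by (intro lpow_subset_lstar) (rule order.trans)
  then show ?thesis
    unfolding lstar_def[of L] by blast
qed

definition supported :: "'a uword set \<Rightarrow> 'a set \<Rightarrow> bool" where
  "supported L S \<longleftrightarrow> (\<forall>v\<in>L. \<forall>a. a \<notin> S \<longrightarrow> v a = 0)"

lemma supported_lconc: "supported A S \<Longrightarrow> supported B T \<Longrightarrow> supported (lconc A B) (S \<union> T)"
  unfolding supported_def lconc_def by (auto simp: uconc_apply)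

lemma supported_lpow: "supported A S \<Longrightarrow> supported (lpow i A) S"
proof (induction i)
  case (Suc i)
  then show ?case using supported_lconc[of A S "lpow i A" S] by simp
qed (simp add: supported_def)

lemma supported_lstar: "supported L S \<Longrightarrow> supported (lstar L) S"
  using supported_lpow unfolding lstar_def supported_def by blast

lemma supported_lang: "supported (lang E) (set (syms E))"
proof (induction E)
  case (Disj Es)
  then show ?case by (fastforce simp: supported_def)
next
  case (Conc Es)
  then show ?case
  proof (induction Es)
    case (Cons E Es)
    then show ?case using supported_lconc[of "lang E" "set (syms E)"] by simp
  qed (simp add: supported_def)
next
  case (Mult E I)
  then show ?case
    using supported_lpow[of "lang E"] by (cases I) (auto simp: supported_def)
qed (simp add: supported_def)

lemma lang_nonzero_imp_syms: "v \<in> lang E \<Longrightarrow> v a \<noteq> 0 \<Longrightarrow> a \<in> set (syms E)"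
  using supported_lang[of E] unfolding supported_def by metis

definition urestrict :: "'a set \<Rightarrow> 'a uword \<Rightarrow> 'a uword" where
  "urestrict S u = (\<lambda>a. if a \<in> S then u a else 0)"

lemma uconc_urestrict_Compl: "uconc (urestrict S u) (urestrict (- S) u) = u"
  by (auto simp: uconc_def urestrict_def)

lemma urestrict_Un:
  "S \<inter> T = {} \<Longrightarrow> urestrict (S \<union> T) u = uconc (urestrict S u) (urestrict T u)"
  by (auto simp: urestrict_def uconc_def fun_eq_iff)

lemma urestrict_concat_mem_lstar:
  assumes "\<forall>x\<in>set xs. urestrict (set (f x)) u \<in> lstar L" "distinct (concat (map f xs))"
  shows "urestrict (set (concat (map f xs))) u \<in> lstar L"
  using assms
proof (induction xs)
  case Nil
  show ?case
    using uempty_mem_lstar[of L] by (simp add: urestrict_def uempty_def)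
next
  case (Cons x xs)
  then show ?case
    by (simp add: urestrict_Un uconc_mem_lstar)
qed

lemma image_urestrict_lconc:
  assumes "supported A S" "supported B (- S)" "B \<noteq> {}"
  shows "urestrict S ` lconc A B = A"
proof -
  have "urestrict S (uconc u v) = u" if "u \<in> A" "v \<in> B" for u v
    using assms that by (auto simp: supported_def urestrict_def uconc_def)
  with assms(3) show ?thesis
    by (force simp: lconc_def)
qed

definition sat_lang :: "'a uword set \<Rightarrow> 'a uword \<Rightarrow> bool" where
  "sat_lang L w \<longleftrightarrow>
     (\<forall>a b. (\<forall>v\<in>L. \<not> (v a \<noteq> 0 \<and> v b \<noteq> 0)) \<longrightarrow> \<not> (w a \<noteq> 0 \<and> w b \<noteq> 0)) \<and>
     (\<forall>a. \<exists>v\<in>L. v a = w a) \<and>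
     (\<forall>X. (\<forall>v\<in>L. \<exists>a\<in>X. v a \<noteq> 0) \<longrightarrow> (\<exists>a\<in>X. w a \<noteq> 0)) \<and>
     (\<forall>a b. (\<forall>v\<in>L. v b \<le> v a) \<longrightarrow> w b \<le> w a)"

lemma sat_iff_sat_lang: "sat w E \<longleftrightarrow> sat_lang (lang E) w"
proof -
  have "(\<forall>a. (a, w a) \<in> N_of E) \<longleftrightarrow> (\<forall>a. \<exists>v\<in>lang E. v a = w a)"
    unfolding N_of_def by (auto; metis)
  then show ?thesis
    unfolding sat_def sat_lang_def C_of_def P_of_def K_of_def by auto
qed

lemma sat_lang_if_mem: "w \<in> L \<Longrightarrow> sat_lang L w"
  unfolding sat_lang_def by auto

lemma sat_lang_C:
  "sat_lang L w \<Longrightarrow> (\<And>v. v \<in> L \<Longrightarrow> \<not> (v a \<noteq> 0 \<and> v b \<noteq> 0)) \<Longrightarrow> \<not> (w a \<noteq> 0 \<and> w b \<noteq> 0)"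
  unfolding sat_lang_def by blast

lemma sat_lang_N: "sat_lang L w \<Longrightarrow> \<exists>v\<in>L. v a = w a"
  unfolding sat_lang_def by blast

lemma sat_lang_P: "sat_lang L w \<Longrightarrow> (\<And>v. v \<in> L \<Longrightarrow> \<exists>a\<in>X. v a \<noteq> 0) \<Longrightarrow> \<exists>a\<in>X. w a \<noteq> 0"
  unfolding sat_lang_def by blast

lemma sat_lang_K: "sat_lang L w \<Longrightarrow> (\<And>v. v \<in> L \<Longrightarrow> v b \<le> v a) \<Longrightarrow> w b \<le> w a"
  unfolding sat_lang_def by blast

lemma sat_lang_supported: "sat_lang L w \<Longrightarrow> supported L S \<Longrightarrow> a \<notin> S \<Longrightarrow> w a = 0"
  using sat_lang_N[of L w a] unfolding supported_def by force

lemma uempty_mem_if_sat_lang: "sat_lang L uempty \<Longrightarrow> uempty \<in> L"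
proof -
  assume "sat_lang L uempty"
  then obtain v where "v \<in> L" "\<forall>a. v a = 0"
    using sat_lang_P[of L uempty UNIV] by fastforce
  then show "uempty \<in> L"
    by (metis eq_uempty_iff)
qed

lemma sat_lang_urestrict:
  assumes sat: "sat_lang L u"
  shows "sat_lang (urestrict S ` L) (urestrict S u)"
  unfolding sat_lang_def
proof (intro conjI allI impI)
  fix a b
  assume "\<forall>v\<in>urestrict S ` L. \<not> (v a \<noteq> 0 \<and> v b \<noteq> 0)"
  then show "\<not> (urestrict S u a \<noteq> 0 \<and> urestrict S u b \<noteq> 0)"
    using sat_lang_C[OF sat, of a b] by (auto simp: urestrict_def split: if_splits)
next
  fix a
  show "\<exists>v\<in>urestrict S ` L. v a = urestrict S u a"
    using sat_lang_N[OF sat, of a] by (auto simp: urestrict_def)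
next
  fix X
  assume "\<forall>v\<in>urestrict S ` L. \<exists>a\<in>X. v a \<noteq> 0"
  then have "\<exists>a\<in>X \<inter> S. v a \<noteq> 0" if "v \<in> L" for v
    using that by (fastforce simp: urestrict_def split: if_splits)
  then show "\<exists>a\<in>X. urestrict S u a \<noteq> 0"
    using sat_lang_P[OF sat, of "X \<inter> S"] by (auto simp: urestrict_def)
next
  fix a b
  assume dom: "\<forall>v\<in>urestrict S ` L. v b \<le> v a"
  show "urestrict S u b \<le> urestrict S u a"
  proof (cases "b \<in> S \<and> a \<notin> S")
    case True
    \<comment> \<open>then every word of L vanishes at b, hence so does u\<close>
    obtain v where "v \<in> L" "v b = u b"
      using sat_lang_N[OF sat] by blast
    with dom True show ?thesis
      by (force simp: urestrict_def)
  next
    case False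
    then show ?thesis
      using dom sat_lang_K[OF sat, of b a] by (auto simp: urestrict_def)
  qed
qed

definition characterized :: "'a uword set \<Rightarrow> bool" where
  "characterized L \<longleftrightarrow> (\<forall>w. sat_lang L w \<longrightarrow> w \<in> L)"

lemma characterized_lconc:
  assumes "supported A S" "supported B (- S)" "characterized A" "characterized B"
  shows "characterized (lconc A B)"
  unfolding characterized_def
proof (intro allI impI)
  fix u assume sat: "sat_lang (lconc A B) u"
  then have "lconc A B \<noteq> {}"
    using sat_lang_N by fastforce
  then have "A \<noteq> {}" "B \<noteq> {}"
    by (auto simp: lconc_def)
  then have "urestrict S ` lconc A B = A" "urestrict (- S) ` lconc A B = B"
    using assms(1,2) image_urestrict_lconc[of B "- S" A] by (auto simp: image_urestrict_lconc lconc_commute)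
  then have "urestrict S u \<in> A" "urestrict (- S) u \<in> B"
    using assms(3,4) sat_lang_urestrict[OF sat] unfolding characterized_def by metis+
  then show "u \<in> lconc A B"
    using uconc_urestrict_Compl[of S u] by (force simp: mem_lconc_iff)
qed

lemma characterized_lang_Conc:
  assumes "\<forall>F\<in>set Fs. characterized (lang F)" "distinct (concat (map syms Fs))"
  shows "characterized (lang (Conc Fs))"
  using assms
proof (induction Fs)
  case Nil
  have "sat_lang {uempty} u \<Longrightarrow> u = uempty" for u :: "'a uword"
    using sat_lang_N[of "{uempty}" u] by (auto simp: eq_uempty_iff)
  then show ?case by (simp add: characterized_def)
next
  case (Cons F Fs)
  have "supported (lang (Conc Fs)) (- set (syms F))"
    using supported_lang[of "Conc Fs"] Cons.prems(2) by (auto simp: supported_def)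
  with Cons show ?case
    using characterized_lconc[OF supported_lang[of F]] by simp
qed

lemma lang_Mult_iv_one: "lang (Mult E iv_one) = lang E"
  by (auto simp: iv_one_def one_enat_def)

lemma lang_Mult_iv_opt: "lang (Mult E iv_opt) = insert uempty (lang E)"
  by (auto simp: iv_opt_def one_enat_def le_Suc_eq)

lemma lang_Mult_iv_star: "lang (Mult E iv_star) = lstar (lang E)"
  by (auto simp: iv_star_def lstar_def)

lemma lang_Mult_iv_plus: "lang (Mult E iv_plus) = (\<Union>i\<in>{1..}. lpow i (lang E))"
  by (auto simp: iv_plus_def)

definition atom_words :: "nat \<Rightarrow> 'a set \<Rightarrow> 'a set \<Rightarrow> 'a uword set" where
  "atom_words i M Q =
     {v. (\<forall>a\<in>M. v a = i) \<and> (\<forall>a\<in>Q. v a \<le> i) \<and> (\<forall>a. a \<notin> M \<union> Q \<longrightarrow> v a = 0)}"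

lemma lpow_atom_words: "lpow i (atom_words 1 M Q) = atom_words i M Q"
proof (induction i)
  case 0
  show ?case
    by (auto simp: atom_words_def eq_uempty_iff; metis)
next
  case (Suc i)
  have "lconc (atom_words 1 M Q) (atom_words i M Q) = atom_words (Suc i) M Q"
  proof (intro set_eqI iffI)
    fix x assume "x \<in> lconc (atom_words 1 M Q) (atom_words i M Q)"
    then show "x \<in> atom_words (Suc i) M Q"
      by (fastforce simp: mem_lconc_iff atom_words_def uconc_apply intro: add_mono)
  next
    fix x assume x: "x \<in> atom_words (Suc i) M Q"
    \<comment> \<open>split off one copy of the atom\<close>
    define u where "u = (\<lambda>a. if a \<in> M then 1 else if a \<in> Q then min 1 (x a) else (0::nat))"
    have "u \<in> atom_words 1 M Q" "(\<lambda>a. x a - u a) \<in> atom_words i M Q"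
      using x by (auto simp: atom_words_def u_def)
    moreover have "x = uconc u (\<lambda>a. x a - u a)"
      using x by (auto simp: atom_words_def u_def uconc_def)
    ultimately show "x \<in> lconc (atom_words 1 M Q) (atom_words i M Q)"
      by (auto simp: mem_lconc_iff)
  qed
  with Suc show ?case by simp
qed

lemma lconc_Sym_atom_words:
  assumes "a \<notin> M \<union> Q"
  shows "lconc (lang (Sym a)) (atom_words 1 M Q) = atom_words 1 (insert a M) Q"
proof (intro set_eqI iffI)
  fix x assume "x \<in> lconc (lang (Sym a)) (atom_words 1 M Q)"
  then show "x \<in> atom_words 1 (insert a M) Q"
    using assms by (auto simp: mem_lconc_iff atom_words_def uconc_apply)
next
  fix x assume x: "x \<in> atom_words 1 (insert a M) Q"
  then have "x(a := 0) \<in> atom_words 1 M Q" "x = uconc (\<lambda>b. if b = a then 1 else 0) (x(a := 0))"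
    using assms by (auto simp: atom_words_def uconc_def)
  then show "x \<in> lconc (lang (Sym a)) (atom_words 1 M Q)"
    by (auto simp: mem_lconc_iff)
qed

lemma lconc_Sym_opt_atom_words:
  assumes "a \<notin> M \<union> Q"
  shows "lconc (insert uempty (lang (Sym a))) (atom_words 1 M Q) = atom_words 1 M (insert a Q)"
proof (intro set_eqI iffI)
  fix x assume "x \<in> lconc (insert uempty (lang (Sym a))) (atom_words 1 M Q)"
  then show "x \<in> atom_words 1 M (insert a Q)"
    using assms by (auto simp: mem_lconc_iff atom_words_def uconc_apply)
next
  fix x assume x: "x \<in> atom_words 1 M (insert a Q)"
  then have "x(a := 0) \<in> atom_words 1 M Q" "x = uconc (\<lambda>b. if b = a then x a else 0) (x(a := 0))"
    using assms by (auto simp: atom_words_def uconc_def)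
  moreover have "(\<lambda>b. if b = a then x a else 0) \<in> insert uempty (lang (Sym a))"
    using x by (auto simp: atom_words_def uempty_def le_Suc_eq fun_eq_iff)
  ultimately show "x \<in> lconc (insert uempty (lang (Sym a))) (atom_words 1 M Q)"
    by (auto simp: mem_lconc_iff)
qed

lemma lang_atom_list:
  assumes "\<forall>(a, I)\<in>set ys. I \<in> {iv_opt, iv_one}" "distinct (map fst ys)"
  shows "lang (Conc (map (\<lambda>(a, I). Mult (Sym a) I) ys))
           = atom_words 1 {a. (a, iv_one) \<in> set ys} {a. (a, iv_opt) \<in> set ys}"
  using assms
proof (induction ys)
  case Nil
  show ?case by (auto simp: atom_words_def eq_uempty_iff)
next
  case (Cons p ys)
  obtain a I where p: "p = (a, I)" by fastforce
  have fresh: "a \<notin> {a. (a, iv_one) \<in> set ys} \<union> {a. (a, iv_opt) \<in> set ys}"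
    using Cons.prems(2) p by force
  have IH: "lang (Conc (map (\<lambda>(a, I). Mult (Sym a) I) ys))
             = atom_words 1 {a. (a, iv_one) \<in> set ys} {a. (a, iv_opt) \<in> set ys}"
    using Cons by simp
  have "iv_opt \<noteq> iv_one"
    by (simp add: iv_opt_def iv_one_def)
  moreover have "I = iv_one \<or> I = iv_opt"
    using Cons.prems(1) p by auto
  ultimately consider
      "I = iv_one" "{b. (b, iv_one) \<in> set (p # ys)} = insert a {b. (b, iv_one) \<in> set ys}"
        "{b. (b, iv_opt) \<in> set (p # ys)} = {b. (b, iv_opt) \<in> set ys}"
    | "I = iv_opt" "{b. (b, iv_one) \<in> set (p # ys)} = {b. (b, iv_one) \<in> set ys}"
        "{b. (b, iv_opt) \<in> set (p # ys)} = insert a {b. (b, iv_opt) \<in> set ys}"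
    using p by auto
  then show ?case
  proof cases
    case 1
    then show ?thesis
      using lconc_Sym_atom_words[OF fresh] IH by (simp add: p lang_Mult_iv_one del: lang.simps(1))
  next
    case 2
    then show ?thesis
      using lconc_Sym_opt_atom_words[OF fresh] IH by (simp add: p lang_Mult_iv_opt del: lang.simps(1))
  qed
qed

lemma lang_atom:
  assumes "is_atom A" "distinct (syms A)"
  obtains M Q where "lang A = atom_words 1 M Q" "set (syms A) = M \<union> Q"
proof -
  obtain ys where ys: "A = Conc (map (\<lambda>(a, I). Mult (Sym a) I) ys)"
    "\<forall>(a, I)\<in>set ys. I \<in> {iv_opt, iv_one}"
    using assms(1) unfolding is_atom_def by blast
  have "syms A = map fst ys"
    unfolding ys(1) by (induction ys) auto
  then have "lang A = atom_words 1 {a. (a, iv_one) \<in> set ys} {a. (a, iv_opt) \<in> set ys}"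
    and "set (syms A) = {a. (a, iv_one) \<in> set ys} \<union> {a. (a, iv_opt) \<in> set ys}"
    using lang_atom_list[OF ys(2)] assms(2) ys by force+
  then show ?thesis using that by blast
qed

lemma lang_Mult_atom_words:
  assumes "lang A = atom_words 1 M Q"
  shows "lang (Mult A (Intv n m q))
           = {w. \<exists>i. n \<le> i \<and> enat i \<le> m \<and> w \<in> atom_words i M Q} \<union> (if q then {uempty} else {})"
  by (simp only: lang.simps assms lpow_atom_words)

definition balanced :: "'a set \<Rightarrow> 'a set \<Rightarrow> 'a uword \<Rightarrow> bool" where
  "balanced M Q v \<longleftrightarrow> (\<forall>a\<in>M. \<forall>b\<in>M. v a = v b) \<and> (\<forall>a\<in>M. \<forall>b\<in>Q. v b \<le> v a)"

lemma balanced_if_atom_words: "v \<in> atom_words i M Q \<Longrightarrow> balanced M Q v"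
  unfolding balanced_def atom_words_def by auto

lemma balanced_if_vanishes: "\<forall>b\<in>M \<union> Q. v b = 0 \<Longrightarrow> balanced M Q v"
  unfolding balanced_def by simp

lemma balanced_uconc: "balanced M Q u \<Longrightarrow> balanced M Q v \<Longrightarrow> balanced M Q (uconc u v)"
  unfolding balanced_def uconc_apply by (metis add_mono)

lemma balanced_lstar:
  assumes "\<forall>v\<in>L. balanced M Q v" "v \<in> lstar L"
  shows "balanced M Q v"
proof -
  have "balanced M Q v" if "v \<in> lpow i L" for i
    using that
  proof (induction i arbitrary: v)
    case 0
    then show ?case by (simp add: balanced_if_vanishes)
  next
    case (Suc i)
    then show ?case
      using assms(1) by (auto simp: mem_lconc_iff intro: balanced_uconc)
  qed
  with assms(2) show ?thesis
    unfolding lstar_def by blast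
qed

lemma balanced_urestrict:
  assumes "M \<union> Q \<subseteq> S" "balanced M Q u"
  shows "balanced M Q (urestrict S u)"
proof -
  have "urestrict S u a = u a" if "a \<in> M \<union> Q" for a
    using assms(1) that by (auto simp: urestrict_def)
  with assms(2) show ?thesis
    unfolding balanced_def by (metis UnI1 UnI2)
qed

lemma sat_lang_balanced:
  assumes "sat_lang L u" "\<forall>v\<in>L. balanced M Q v"
  shows "balanced M Q u"
  unfolding balanced_def
proof (intro conjI ballI)
  fix a b assume "a \<in> M" "b \<in> M"
  then have "\<forall>v\<in>L. v a = v b"
    using assms(2) by (auto simp: balanced_def)
  then have "u b \<le> u a" "u a \<le> u b"
    using sat_lang_K[OF assms(1), of b a] sat_lang_K[OF assms(1), of a b] by (metis order.refl)+
  then show "u a = u b" by simp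
next
  fix a b assume "a \<in> M" "b \<in> Q"
  then show "u b \<le> u a"
    using assms(2) sat_lang_K[OF assms(1), of b a] by (auto simp: balanced_def)
qed

lemma atom_words_if_balanced:
  "m \<in> M \<Longrightarrow> balanced M Q u \<Longrightarrow> \<forall>a. a \<notin> M \<union> Q \<longrightarrow> u a = 0 \<Longrightarrow> u \<in> atom_words (u m) M Q"
  unfolding balanced_def atom_words_def by blast

lemma ex_atom_words_if_balanced:
  assumes "finite Q" "balanced M Q u" "\<forall>a. a \<notin> M \<union> Q \<longrightarrow> u a = 0"
  shows "\<exists>c. u \<in> atom_words c M Q"
proof (cases "M = {}")
  case True
  then have "u \<in> atom_words (Max (insert 0 (u ` Q))) M Q"
    using assms(1,3) by (auto simp: atom_words_def)
  then show ?thesis ..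
next
  case False
  then obtain m where "m \<in> M" by blast
  then show ?thesis
    using atom_words_if_balanced[OF _ assms(2,3)] by blast
qed

lemma urestrict_mem_lstar_if_balanced:
  assumes "lang A = atom_words 1 M Q" "finite Q" "balanced M Q u"
  shows "urestrict (M \<union> Q) u \<in> lstar (lang A)"
proof -
  have "balanced M Q (urestrict (M \<union> Q) u)"
    using balanced_urestrict[OF _ assms(3)] by blast
  then obtain c where "urestrict (M \<union> Q) u \<in> atom_words c M Q"
    using ex_atom_words_if_balanced[OF assms(2)] by (fastforce simp: urestrict_def)
  then show ?thesis
    unfolding assms(1) lstar_def lpow_atom_words by blast
qed

lemma balanced_lang_Mult_atom:
  assumes "lang A = atom_words 1 M Q" "v \<in> lang (Mult A J)"
  shows "balanced M Q v"
proof -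
  obtain n m q where "J = Intv n m q" by (cases J)
  with assms(2) have "v \<in> lang (Mult A (Intv n m q))" by simp
  then show ?thesis
    unfolding lang_Mult_atom_words[OF assms(1)]
    by (auto simp: balanced_if_atom_words balanced_if_vanishes split: if_splits)
qed

lemma lang_Disj_branch:
  assumes "distinct (concat (map syms Bs))" "v \<in> lang (Disj Bs)" "B \<in> set Bs"
    "a \<in> set (syms B)" "v a \<noteq> 0"
  shows "v \<in> lang B"
proof -
  obtain B' where "B' \<in> set Bs" "v \<in> lang B'"
    using assms(2) by auto
  moreover have "B' = B"
    using distinct_concat_map_unique[OF assms(1) \<open>B' \<in> set Bs\<close> assms(3)]
      lang_nonzero_imp_syms[OF \<open>v \<in> lang B'\<close> assms(5)] assms(4) by blast
  ultimately show ?thesis by simp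
qed

lemma clause_atomE:
  assumes "\<forall>(A, J)\<in>set cs. is_atom A" "distinct (syms (Disj (map (\<lambda>(A, J). Mult A J) cs)))"
    "(A, J) \<in> set cs"
  obtains M Q where "lang A = atom_words 1 M Q" "set (syms A) = M \<union> Q" "finite Q"
proof -
  have "distinct (syms A)"
    using distinct_concat_map_member[of "\<lambda>x. syms (fst x)" cs "(A, J)"] assms(2,3)
    by (simp add: case_prod_beta comp_def)
  then obtain M Q where "lang A = atom_words 1 M Q" "set (syms A) = M \<union> Q"
    using lang_atom assms(1,3) by blast
  moreover have "finite Q"
    using \<open>set (syms A) = M \<union> Q\<close> by (metis finite_Un finite_set)
  ultimately show ?thesis using that by blast
qed

lemma balanced_lang_Disj:
  assumes "distinct (syms (Disj Bs))" "Mult A J \<in> set Bs"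
    "lang A = atom_words 1 M Q" "set (syms A) = M \<union> Q" "v \<in> lang (Disj Bs)"
  shows "balanced M Q v"
proof (cases "\<forall>b\<in>M \<union> Q. v b = 0")
  case True
  then show ?thesis by (rule balanced_if_vanishes)
next
  case False
  then obtain b where "b \<in> M \<union> Q" "v b \<noteq> 0" by blast
  then have "v \<in> lang (Mult A J)"
    using lang_Disj_branch[of Bs v "Mult A J" b] assms by simp
  then show ?thesis
    using balanced_lang_Mult_atom[OF assms(3)] by blast
qed

lemma simple_clause_sat_lang_mem_lstar:
  assumes "is_simple_clause D" "distinct (syms D)" "L \<subseteq> lstar (lang D)" "sat_lang L u"
  shows "u \<in> lstar (lang D)"
proof -
  obtain cs where D: "D = Disj (map (\<lambda>(A, J). Mult A J) cs)"
    and cs: "\<forall>(A, J)\<in>set cs. is_atom A \<and> J \<in> {iv_opt, iv_one}"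
    using assms(1) unfolding is_simple_clause_def by blast
  have "urestrict (set (syms A)) u \<in> lstar (lang D)" if AJ: "(A, J) \<in> set cs" for A J
  proof -
    have "\<forall>(A, J)\<in>set cs. is_atom A"
      using cs by auto
    then obtain M Q where A: "lang A = atom_words 1 M Q" "set (syms A) = M \<union> Q" "finite Q"
      using clause_atomE[OF _ _ AJ] assms(2) D by blast
    have B: "Mult A J \<in> set (map (\<lambda>(A, J). Mult A J) cs)"
      using AJ by force
    have "\<forall>v\<in>L. balanced M Q v"
      using balanced_lang_Disj[OF _ B A(1,2)] balanced_lstar assms(2,3) D by blast
    then have u: "urestrict (M \<union> Q) u \<in> lstar (lang A)"
      using urestrict_mem_lstar_if_balanced[OF A(1,3)] sat_lang_balanced[OF assms(4)] by blast
    have "lang A \<subseteq> lang (Mult A J)"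
      using cs AJ by (auto simp: lang_Mult_iv_one lang_Mult_iv_opt)
    also have "\<dots> \<subseteq> lang D"
      using B unfolding D by auto
    finally have "lstar (lang A) \<subseteq> lstar (lang D)"
      by (rule lstar_mono)
    with u A(2) show ?thesis
      by auto
  qed
  then have "urestrict (set (concat (map (\<lambda>x. syms (fst x)) cs))) u \<in> lstar (lang D)"
    using assms(2) unfolding D
    by (intro urestrict_concat_mem_lstar) (auto simp: case_prod_beta comp_def)
  moreover have "urestrict (set (syms D)) u = u"
    using sat_lang_supported[OF assms(4)] supported_lstar[OF supported_lang, of D] assms(3)
    by (auto simp: urestrict_def supported_def fun_eq_iff)
  ultimately show ?thesis
    unfolding D by (simp add: case_prod_beta comp_def)
qed

lemma characterized_lang_Mult_simple_clause:
  assumes "is_simple_clause D" "distinct (syms D)" "I \<in> {iv_plus, iv_star}"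
  shows "characterized (lang (Mult D I))"
  unfolding characterized_def
proof (intro allI impI)
  fix u assume sat: "sat_lang (lang (Mult D I)) u"
  have "lang (Mult D I) \<subseteq> lstar (lang D)"
    using assms(3) by (auto simp: lang_Mult_iv_plus lang_Mult_iv_star lstar_def)
  then obtain i where i: "u \<in> lpow i (lang D)"
    using simple_clause_sat_lang_mem_lstar[OF assms(1,2) _ sat] unfolding lstar_def by blast
  show "u \<in> lang (Mult D I)"
  proof (cases "u = uempty")
    case True
    with sat show ?thesis by (simp add: uempty_mem_if_sat_lang)
  next
    case False
    with i have "i \<ge> 1"
      by (cases i) auto
    with i assms(3) show ?thesis
      by (auto simp: lang_Mult_iv_plus lang_Mult_iv_star lstar_def)
  qed
qed

lemma sat_lang_atom_support:
  assumes range: "\<forall>v\<in>L. \<forall>b\<in>M \<union> Q. v b \<noteq> 0 \<longrightarrow> (\<exists>i. v \<in> atom_words i M Q)"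
    and sat: "sat_lang L u" and a: "a \<in> M \<union> Q" "u a \<noteq> 0" and b: "b \<notin> M \<union> Q"
  shows "u b = 0"
proof -
  have "\<not> (v a \<noteq> 0 \<and> v b \<noteq> 0)" if "v \<in> L" for v
    using range that a(1) b by (auto simp: atom_words_def)
  then show ?thesis
    using sat_lang_C[OF sat] a(2) by blast
qed

lemma sat_lang_atom_balanced:
  assumes "\<forall>v\<in>L. \<forall>b\<in>M \<union> Q. v b \<noteq> 0 \<longrightarrow> (\<exists>i. v \<in> atom_words i M Q)" "sat_lang L u"
  shows "balanced M Q u"
proof -
  have "balanced M Q v" if "v \<in> L" for v
    using assms(1) that balanced_if_atom_words balanced_if_vanishes by metis
  then show ?thesis
    using sat_lang_balanced[OF assms(2)] by blast
qed

lemma sat_lang_atom_level: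
  assumes range: "\<forall>v\<in>L. \<forall>b\<in>M \<union> Q. v b \<noteq> 0 \<longrightarrow> (\<exists>i. n \<le> i \<and> enat i \<le> m \<and> v \<in> atom_words i M Q)"
    and fin: "finite Q" and sat: "sat_lang L u" and a: "a \<in> M \<union> Q" "u a \<noteq> 0"
  shows "\<exists>c. n \<le> c \<and> enat c \<le> m \<and> u \<in> atom_words c M Q"
proof -
  have "\<forall>v\<in>L. \<forall>b\<in>M \<union> Q. v b \<noteq> 0 \<longrightarrow> (\<exists>i. v \<in> atom_words i M Q)"
    using range by fast
  then have bal: "balanced M Q u" and supp: "\<forall>b. b \<notin> M \<union> Q \<longrightarrow> u b = 0"
    using sat_lang_atom_balanced[OF _ sat] sat_lang_atom_support[OF _ sat a] by blast+
  have level: "\<exists>i. n \<le> i \<and> enat i \<le> m \<and> u b \<le> i \<and> (b \<in> M \<longrightarrow> u b = i)"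
    if "b \<in> M \<union> Q" "u b \<noteq> 0" for b
  proof -
    obtain v where v: "v \<in> L" "v b = u b"
      using sat_lang_N[OF sat] by blast
    with range that obtain i where "n \<le> i" "enat i \<le> m" "v \<in> atom_words i M Q"
      by metis
    with v(2) that(1) show ?thesis
      unfolding atom_words_def by (intro exI[of _ i]) auto
  qed
  show ?thesis
  proof (cases "M = {}")
    case False
    then obtain k where k: "k \<in> M" by blast
    have "u a \<le> u k"
      using a(1) bal k unfolding balanced_def by (metis Un_iff order.refl)
    with a(2) obtain i where "n \<le> i" "enat i \<le> m" "u k = i"
      using level[of k] k by auto
    then show ?thesis
      using atom_words_if_balanced[OF k bal supp] by blast
  next
    case True
    \<comment> \<open>without mandatory symbols any level above the largest count is admissible\<close>
    define c where "c = Max (u ` Q)"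
    have "a \<in> Q" "u a \<le> c"
      using a(1) True fin by (auto simp: c_def)
    moreover obtain b where "b \<in> Q" "u b = c"
      using fin \<open>a \<in> Q\<close> Max_in[of "u ` Q"] unfolding c_def by (metis empty_iff finite_imageI image_iff image_is_empty)
    ultimately obtain i j where "n \<le> i" "enat i \<le> m" "enat j \<le> m" "c \<le> j"
      using level[of a] level[of b] a(2) by force
    then have "n \<le> max n c" "enat (max n c) \<le> m"
      by (auto simp: max_def order.trans[of "enat c" "enat j" m] order.trans[of "enat n" "enat i" m])
    moreover have "u \<in> atom_words (max n c) M Q"
      using True supp fin by (auto simp: atom_words_def c_def le_max_iff_disj)
    ultimately show ?thesis by blast
  qed
qed

lemma sat_lang_mem_lang_Mult_atom:
  assumes A: "lang A = atom_words 1 M Q" "finite Q"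
    and branch: "\<forall>v\<in>L. \<forall>b\<in>M \<union> Q. v b \<noteq> 0 \<longrightarrow> v \<in> lang (Mult A (Intv n m q))"
    and sat: "sat_lang L u" and a: "a \<in> M \<union> Q" "u a \<noteq> 0"
  shows "u \<in> lang (Mult A (Intv n m q))"
proof -
  have "\<forall>v\<in>L. \<forall>b\<in>M \<union> Q. v b \<noteq> 0 \<longrightarrow> (\<exists>i. n \<le> i \<and> enat i \<le> m \<and> v \<in> atom_words i M Q)"
    using branch unfolding lang_Mult_atom_words[OF A(1)] by (auto split: if_splits)
  then show ?thesis
    using sat_lang_atom_level[OF _ A(2) sat a] unfolding lang_Mult_atom_words[OF A(1)] by blast
qed

lemma clause_sat_lang_mem:
  assumes "is_clause D" "distinct (syms D)" "L \<subseteq> insert uempty (lang D)"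
    and sat: "sat_lang L u" and a: "u a \<noteq> 0"
  shows "u \<in> lang D"
proof -
  obtain cs where D: "D = Disj (map (\<lambda>(A, J). Mult A J) cs)" and cs: "\<forall>(A, J)\<in>set cs. is_atom A"
    using assms(1) unfolding is_clause_def by blast
  obtain v where v: "v \<in> L" "v a = u a"
    using sat_lang_N[OF sat] by blast
  with assms(3) a have "v \<in> lang D" by auto
  then obtain A J where "(A, J) \<in> set cs" "v \<in> lang (Mult A J)"
    unfolding D by auto
  moreover obtain n m q where "J = Intv n m q"
    by (cases J)
  ultimately have AJ: "(A, Intv n m q) \<in> set cs" "v \<in> lang (Mult A (Intv n m q))"
    by simp_all
  obtain M Q where A: "lang A = atom_words 1 M Q" "set (syms A) = M \<union> Q" "finite Q"
    using clause_atomE[OF cs _ AJ(1)] assms(2) D by blast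
  have "a \<in> M \<union> Q"
    using lang_nonzero_imp_syms[OF AJ(2)] v(2) a A(2) by simp
  have B: "Mult A (Intv n m q) \<in> set (map (\<lambda>(A, J). Mult A J) cs)"
    using AJ(1) by force
  have dist: "distinct (concat (map syms (map (\<lambda>(A, J). Mult A J) cs)))"
    using assms(2) D by simp
  have "\<forall>w\<in>L. \<forall>b\<in>M \<union> Q. w b \<noteq> 0 \<longrightarrow> w \<in> lang (Mult A (Intv n m q))"
  proof (intro ballI impI)
    fix w b assume "w \<in> L" "b \<in> M \<union> Q" "w b \<noteq> 0"
    with assms(3) have "w \<in> lang D" by auto
    with \<open>b \<in> M \<union> Q\<close> \<open>w b \<noteq> 0\<close> show "w \<in> lang (Mult A (Intv n m q))"
      using lang_Disj_branch[OF dist _ B, of w b] A(2) D by simp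
  qed
  then have "u \<in> lang (Mult A (Intv n m q))"
    using sat_lang_mem_lang_Mult_atom[OF A(1,3) _ sat \<open>a \<in> M \<union> Q\<close> a] by blast
  then show ?thesis
    using B unfolding D lang.simps(2) by blast
qed

lemma characterized_lang_Mult_clause:
  assumes "is_clause D" "distinct (syms D)" "I \<in> {iv_one, iv_opt}"
  shows "characterized (lang (Mult D I))"
  unfolding characterized_def
proof (intro allI impI)
  fix u assume sat: "sat_lang (lang (Mult D I)) u"
  have L: "lang D \<subseteq> lang (Mult D I)" "lang (Mult D I) \<subseteq> insert uempty (lang D)"
    using assms(3) by (auto simp: lang_Mult_iv_one lang_Mult_iv_opt)
  show "u \<in> lang (Mult D I)"
  proof (cases "u = uempty")
    case True
    with sat show ?thesis by (simp add: uempty_mem_if_sat_lang)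
  next
    case False
    then obtain a where "u a \<noteq> 0"
      by (auto simp: eq_uempty_iff)
    with L show ?thesis
      using clause_sat_lang_mem[OF assms(1,2) L(2) sat] by blast
  qed
qed

lemma characterized_lang_dime:
  assumes "is_dime E"
  shows "characterized (lang E)"
proof -
  obtain xs where E: "E = Conc (map (\<lambda>(D, I). Mult D I) xs)"
    and xs: "\<forall>(D, I)\<in>set xs. (is_simple_clause D \<and> I \<in> {iv_plus, iv_star})
                              \<or> (is_clause D \<and> I \<in> {iv_one, iv_opt})"
    and dist: "distinct (syms E)"
    using assms unfolding is_dime_def by blast
  have "characterized (lang (Mult D I))" if DI: "(D, I) \<in> set xs" for D I
  proof -
    have "distinct (syms D)"
      using distinct_concat_map_member[of "\<lambda>x. syms (fst x)" xs "(D, I)"] dist DI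
      unfolding E by (simp add: case_prod_beta comp_def)
    then show ?thesis
      using xs DI characterized_lang_Mult_simple_clause characterized_lang_Mult_clause by blast
  qed
  then show ?thesis
    unfolding E using dist E by (intro characterized_lang_Conc) auto
qed

theorem lemma1:
  fixes E :: "'a::finite uexp" and w :: "'a \<Rightarrow> nat"
  assumes "is_dime E"
  shows "w \<in> lang E \<longleftrightarrow> sat w E"
  using characterized_lang_dime[OF assms] sat_lang_if_mem
  unfolding sat_iff_sat_lang characterized_def by blast

end
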